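(* Let $m$ be a positive integer and let $Y \subseteq \mathbb{P}(\mathbb{C}^2\otimes\mathbb{C}^2\otimes\mathbb{C}^{m+1})$ be the Segre variety, i.e. the image of $\mathbb{P}(\mathbb{C}^2)\times\mathbb{P}(\mathbb{C}^2)\times\mathbb{P}(\mathbb{C}^{m+1}) \to \mathbb{P}(\mathbb{C}^2\otimes\mathbb{C}^2\otimes\mathbb{C}^{m+1})$, $[u]\times[v]\times[w]\mapsto[u\otimes v\otimes w]$. There exists a linear subspace $L \subseteq \mathbb{P}(\mathbb{C}^2\otimes\mathbb{C}^2\otimes\mathbb{C}^{m+1})$ of codimension $2m+5$ with $L \cap \sigma_2^\circ(Y) = \emptyset$ such that \[L \cap \sigma_2(Y) = L_1 \sqcup L_2,\] where $L_1, L_2 \subseteq \sigma_2(Y)\setminus\sigma_2^\circ(Y)$ are disjoint linear subspaces spanning $L$.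
   Context: For a subvariety $Y \subseteq \mathbb{P}(V)$, the secant locus is $\sigma_2^\circ(Y) := \bigcup_{p,q \in Y}\langle p,q\rangle$, where $\langle p,q\rangle$ is the linear span of $p$ and $q$ (so $\langle p,p\rangle = \{p\}$); the secant variety $\sigma_2(Y)$ is its Zariski closure. *)

theory Defs
  imports "HOL-Analysis.Analysis" "HOL-Library.Function_Algebras"
begin

text \<open>Tensors in C^2 (x) C^2 (x) C^(m+1) are represented as functions on index triples
  (i,j,k), with i,j < 2 and k \<le> m, extended by zero outside this range.
  Projective subvarieties / linear subspaces of P(V) are represented by their affine
  cones in V (so the empty projective set corresponds to {0}).\<close>

type_synonym tensor = "nat \<times> nat \<times> nat \<Rightarrow> complex"

definition tscale :: "complex \<Rightarrow> tensor \<Rightarrow> tensor" where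
  "tscale c T = (\<lambda>x. c * T x)"

lemma vector_space_tscale: "vector_space tscale"
  by unfold_locales (auto simp: tscale_def algebra_simps fun_eq_iff)

abbreviation csubspace :: "tensor set \<Rightarrow> bool" where
  "csubspace \<equiv> module.subspace tscale"

abbreviation cspan :: "tensor set \<Rightarrow> tensor set" where
  "cspan \<equiv> module.span tscale"

abbreviation cdim :: "tensor set \<Rightarrow> nat" where
  "cdim \<equiv> vector_space.dim tscale"

definition tspace :: "nat \<Rightarrow> tensor set" where
  "tspace m = {T. \<forall>i j k. \<not> (i < 2 \<and> j < 2 \<and> k \<le> m) \<longrightarrow> T (i, j, k) = 0}"

definition segre_cone :: "nat \<Rightarrow> tensor set" where
  "segre_cone m = {T. \<exists>u v w :: nat \<Rightarrow> complex.
      T = (\<lambda>(i, j, k). if i < 2 \<and> j < 2 \<and> k \<le> m then u i * v j * w k else 0)}"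

definition secant_locus_cone :: "tensor set \<Rightarrow> tensor set" where
  "secant_locus_cone Y = (\<Union>p\<in>Y. \<Union>q\<in>Y. cspan {p, q})"

inductive_set polyfun :: "(tensor \<Rightarrow> complex) set" where
  pconst: "(\<lambda>_. c) \<in> polyfun"
| pcoord: "(\<lambda>T. T x) \<in> polyfun"
| padd: "p \<in> polyfun \<Longrightarrow> q \<in> polyfun \<Longrightarrow> (\<lambda>T. p T + q T) \<in> polyfun"
| pmult: "p \<in> polyfun \<Longrightarrow> q \<in> polyfun \<Longrightarrow> (\<lambda>T. p T * q T) \<in> polyfun"

definition zariski_closure :: "tensor set \<Rightarrow> tensor set \<Rightarrow> tensor set" where
  "zariski_closure V S = {x \<in> V. \<forall>p\<in>polyfun. (\<forall>s\<in>S. p s = 0) \<longrightarrow> p x = 0}"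

end

theory Submission
  imports Defs
begin

text \<open>
  Read vectors of \<open>C\<^sup>m\<^sup>+\<^sup>1\<close> as coefficient sequences and let \<open>s\<close> be the shift.
  \<open>L\<^sub>1\<close> consists of the tensors \<open>(e\<^sub>0\<^sub>0 + e\<^sub>1\<^sub>1) \<otimes> f + e\<^sub>0\<^sub>1 \<otimes> s f\<close> with
  \<open>f\<close> of length \<open>m\<close>, and \<open>L\<^sub>2\<close> of the tensors \<open>(e\<^sub>0\<^sub>0 - e\<^sub>1\<^sub>1) \<otimes> s\<^sup>2 g + e\<^sub>1\<^sub>0 \<otimes> g\<close>
  with \<open>g\<close> of length \<open>m - 1\<close>. Both are tangent vectors
  \<open>u' \<otimes> v \<otimes> w + u \<otimes> v' \<otimes> w + u \<otimes> v \<otimes> w'\<close>, i.e. limits of secants, so they lie in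
  \<open>\<sigma>\<^sub>2\<close>, and \<open>dim L = 2m - 1\<close>.

  Every \<open>2 \<times> 2\<close> slice of a point of \<open>\<sigma>\<^sub>2\<degree>\<close> lies in the span of the same two rank-one
  matrices, and such a pencil cannot contain an invertible \<open>P\<close> together with a nonzero \<open>N\<close> for
  which \<open>N adj P\<close> is nilpotent. The slices of a nonzero point of \<open>L\<^sub>i\<close> at an extreme
  coefficient of \<open>f\<close> (resp. \<open>g\<close>) are such a pair, so \<open>L\<^sub>i\<close> meets \<open>\<sigma>\<^sub>2\<degree>\<close> only in 0.

  For a point of \<open>L\<close> with both components nonzero, contracting the first two factors gives
  rows \<open>f\<close>, \<open>s f\<close> and \<open>g\<close> or \<open>s\<^sup>2 g\<close> of a flattening; at the leading coefficients they
  form a triangular \<open>3 \<times> 3\<close> minor with nonzero diagonal. Such minors vanish on \<open>\<sigma>\<^sub>2\<degree>\<close>,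
  hence on its Zariski closure, so the point is not in \<open>\<sigma>\<^sub>2\<close>.
\<close>

section \<open>Coefficient sequences and dimension counting\<close>

interpretation tensor: vector_space tscale
  by (rule vector_space_tscale)

definition vscale :: "complex \<Rightarrow> (nat \<Rightarrow> complex) \<Rightarrow> nat \<Rightarrow> complex" where
  "vscale c x = (\<lambda>t. c * x t)"

interpretation seq: vector_space vscale
  by unfold_locales (auto simp: vscale_def algebra_simps fun_eq_iff)

interpretation seq_tensor: vector_space_pair vscale tscale ..

lemma sum_apply: "(sum f A) x = (\<Sum>a\<in>A. f a x)" for f :: "'b \<Rightarrow> 'c \<Rightarrow> 'd::comm_monoid_add"
  by (induction A rule: infinite_finite_induct) auto

lemma independent_if_private_coordinates:
  assumes "\<And>b. b \<in> B \<Longrightarrow> \<exists>z. b z \<noteq> 0 \<and> (\<forall>b'\<in>B. b' \<noteq> b \<longrightarrow> b' z = 0)"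
  shows "tensor.independent B"
  unfolding tensor.independent_explicit_module
proof (intro allI impI)
  fix t u v assume t: "finite t" "t \<subseteq> B" and s: "(\<Sum>v\<in>t. tscale (u v) v) = 0" and v: "v \<in> t"
  obtain z where z: "v z \<noteq> 0" "\<forall>b'\<in>B. b' \<noteq> v \<longrightarrow> b' z = 0" using assms v t by blast
  have "0 = (\<Sum>w\<in>t. tscale (u w) w) z" using s by simp
  also have "\<dots> = u v * v z + (\<Sum>w\<in>t-{v}. u w * w z)"
    using t v by (simp add: sum_apply tscale_def sum.remove)
  also have "(\<Sum>w\<in>t-{v}. u w * w z) = 0" using z t by (intro sum.neutral) auto
  finally show "u v = 0" using z by simp
qed

definition unit_vec :: "nat \<Rightarrow> nat \<Rightarrow> complex" where
  "unit_vec t = (\<lambda>s. if s = t then 1 else 0)"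

definition trunc :: "nat \<Rightarrow> (nat \<Rightarrow> complex) \<Rightarrow> nat \<Rightarrow> complex" where
  "trunc n x = (\<lambda>k. if k < n then x k else 0)"

lemma trunc_trunc [simp]: "trunc n (trunc n x) = trunc n x"
  by (simp add: trunc_def fun_eq_iff)

lemma trunc_eq_sum_unit_vec: "trunc n x = (\<Sum>t<n. vscale (x t) (unit_vec t))"
  by (simp add: fun_eq_iff trunc_def sum_apply vscale_def unit_vec_def if_distrib[of "(*) _"]
      cong: if_cong)

lemma obtain_last_nonzero:
  assumes "trunc n x \<noteq> 0"
  obtains r where "r < n" "x r \<noteq> 0" "\<And>k. r < k \<Longrightarrow> trunc n x k = 0"
proof -
  let ?S = "{k. k < n \<and> x k \<noteq> 0}"
  have fin: "finite ?S" and ne: "?S \<noteq> {}"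
    using assms by (auto simp: trunc_def fun_eq_iff split: if_splits)
  have "trunc n x k = 0" if "Max ?S < k" for k
  proof -
    have "k \<notin> ?S" using Max_ge[OF fin, of k] that by fastforce
    then show ?thesis by (auto simp: trunc_def)
  qed
  with Max_in[OF fin ne] show ?thesis using that by auto
qed

lemma obtain_first_nonzero:
  assumes "trunc n x \<noteq> 0"
  obtains s where "s < n" "x s \<noteq> 0" "\<And>k. k < s \<Longrightarrow> x k = 0"
proof -
  have "\<exists>s. s < n \<and> x s \<noteq> 0" using assms by (auto simp: trunc_def fun_eq_iff split: if_splits)
  then obtain s where "s < n \<and> x s \<noteq> 0" "\<forall>k<s. \<not> (k < n \<and> x k \<noteq> 0)"
    unfolding exists_least_iff[of "\<lambda>s. s < n \<and> x s \<noteq> 0"] by blast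
  then show ?thesis using that by auto
qed

lemma subspace_range_linear:
  "Vector_Spaces.linear vscale tscale F \<Longrightarrow> csubspace (range F)"
  using seq_tensor.linear_subspace_image[OF _ seq.subspace_UNIV] by blast

lemma range_eq_span_unit_vec_image:
  assumes lin: "Vector_Spaces.linear vscale tscale F" and local: "\<And>x. F x = F (trunc n x)"
  shows "range F = cspan ((\<lambda>t. F (unit_vec t)) ` {..<n})"
proof -
  have "range F = F ` seq.span (unit_vec ` {..<n})"
  proof (intro equalityI subsetI)
    fix T assume "T \<in> range F"
    then obtain x where "T = F (trunc n x)" using local by auto
    moreover have "trunc n x \<in> seq.span (unit_vec ` {..<n})"
      unfolding trunc_eq_sum_unit_vec by (intro seq.span_sum seq.span_scale seq.span_base) auto
    ultimately show "T \<in> F ` seq.span (unit_vec ` {..<n})" by blast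
  qed auto
  also have "\<dots> = cspan (F ` unit_vec ` {..<n})"
    by (rule seq_tensor.linear_span_image[OF lin, symmetric])
  finally show ?thesis by (simp add: image_image)
qed

lemma dim_range_eq_if_coordinates:
  assumes lin: "Vector_Spaces.linear vscale tscale F" and local: "\<And>x. F x = F (trunc n x)"
    and coord: "\<And>x t. t < n \<Longrightarrow> F x (pos t) = x t"
  shows "cdim (range F) = n"
proof -
  let ?B = "(\<lambda>t. F (unit_vec t)) ` {..<n}"
  have coord_unit: "F (unit_vec t) (pos s) = (if s = t then 1 else 0)" if "s < n" for s t
    using coord[OF that] by (simp add: unit_vec_def)
  have "tensor.independent ?B"
  proof (rule independent_if_private_coordinates)
    fix b assume "b \<in> ?B"
    then obtain t where "t < n" "b = F (unit_vec t)" by auto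
    then show "\<exists>z. b z \<noteq> 0 \<and> (\<forall>b'\<in>?B. b' \<noteq> b \<longrightarrow> b' z = 0)"
      by (intro exI[of _ "pos t"]) (auto simp: coord_unit)
  qed
  moreover have "inj_on (\<lambda>t. F (unit_vec t)) {..<n}"
    by (rule inj_onI) (metis coord_unit lessThan_iff zero_neq_one)
  ultimately show ?thesis
    unfolding range_eq_span_unit_vec_image[OF lin local] tensor.dim_span
    by (simp add: tensor.dim_eq_card_independent card_image)
qed

lemma subspace_tspace: "csubspace (tspace m)"
  by (rule tensor.subspaceI) (auto simp: tspace_def tscale_def)

lemma dim_tspace: "cdim (tspace m) = 4 * (m + 1)"
proof -
  define box :: "(nat \<times> nat \<times> nat) set" where "box = {..<2} \<times> {..<2} \<times> {..m}"
  define code :: "nat \<times> nat \<times> nat \<Rightarrow> nat" where "code = (\<lambda>(i, j, k). i + 2 * j + 4 * k)"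
  define decode :: "nat \<Rightarrow> nat \<times> nat \<times> nat" where "decode t = (t mod 2, t div 2 mod 2, t div 4)" for t
  define F :: "(nat \<Rightarrow> complex) \<Rightarrow> tensor" where "F z = (\<lambda>p. if p \<in> box then z (code p) else 0)" for z
  have decode: "decode t \<in> box" "code (decode t) = t" if "t < 4 * (m + 1)" for t
    using that unfolding box_def code_def decode_def by auto presburger
  have code: "code p < 4 * (m + 1)" "decode (code p) = p" if "p \<in> box" for p
    using that unfolding box_def code_def decode_def by (auto simp: less_2_cases_iff) presburger+
  have "Vector_Spaces.linear vscale tscale F"
    by (simp add: Vector_Spaces.linear_iff vector_space_tscale seq.vector_space_axioms F_def
        vscale_def tscale_def fun_eq_iff)
  moreover have "F z = F (trunc (4 * (m + 1)) z)" for z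
    using code(1) by (simp add: F_def trunc_def fun_eq_iff)
  moreover have "F z (decode t) = z t" if "t < 4 * (m + 1)" for z t
    using decode[OF that] by (simp add: F_def)
  ultimately have "cdim (range F) = 4 * (m + 1)"
    by (rule dim_range_eq_if_coordinates)
  moreover have "range F = tspace m"
  proof (intro equalityI subsetI)
    fix T assume T: "T \<in> tspace m"
    have "F (\<lambda>t. T (decode t)) = T"
      using T code(2) by (auto simp: F_def tspace_def box_def fun_eq_iff)
    then show "T \<in> range F" by (metis rangeI)
  qed (auto simp: F_def tspace_def box_def)
  ultimately show ?thesis by simp
qed

section \<open>Secants of the Segre variety and their closure\<close>

abbreviation secant_cone :: "nat \<Rightarrow> tensor set" where
  "secant_cone m \<equiv> secant_locus_cone (segre_cone m)"

abbreviation secant_closure :: "nat \<Rightarrow> tensor set" where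
  "secant_closure m \<equiv> zariski_closure (tspace m) (secant_cone m)"

definition tprod :: "nat \<Rightarrow> (nat \<Rightarrow> complex) \<Rightarrow> (nat \<Rightarrow> complex) \<Rightarrow> (nat \<Rightarrow> complex) \<Rightarrow> tensor" where
  "tprod m u v w = (\<lambda>(i, j, k). if i < 2 \<and> j < 2 \<and> k \<le> m then u i * v j * w k else 0)"

lemma tprod_in_tspace: "tprod m u v w \<in> tspace m"
  unfolding tprod_def tspace_def by auto

lemma cspan_pair: "cspan {p, q} = {tscale a p + tscale b q | a b. True}"
  unfolding tensor.span_insert tensor.span_singleton
  by (auto simp: tscale_def fun_eq_iff) (metis add_diff_cancel_left' diff_add_cancel)+

lemma segre_cone_eq: "segre_cone m = {tprod m u v w | u v w. True}"
  unfolding segre_cone_def tprod_def by auto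

lemma tscale_tprod: "tscale a (tprod m u v w) = tprod m u v (\<lambda>k. a * w k)"
  by (auto simp: tscale_def tprod_def fun_eq_iff)

lemma secant_cone_eq: "secant_cone m = {tprod m u v w + tprod m u' v' w' | u v w u' v' w'. True}"
proof (intro equalityI subsetI)
  fix T assume "T \<in> secant_cone m"
  then obtain u v w u' v' w' a b where "T = tscale a (tprod m u v w) + tscale b (tprod m u' v' w')"
    unfolding secant_locus_cone_def segre_cone_eq cspan_pair by blast
  then show "T \<in> {tprod m u v w + tprod m u' v' w' | u v w u' v' w'. True}"
    unfolding tscale_tprod by blast
next
  fix T assume "T \<in> {tprod m u v w + tprod m u' v' w' | u v w u' v' w'. True}"
  then obtain u v w u' v' w' where T: "T = tprod m u v w + tprod m u' v' w'" by blast
  have "T \<in> cspan {tprod m u v w, tprod m u' v' w'}"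
    unfolding T by (rule tensor.span_add) (auto intro: tensor.span_base)
  then show "T \<in> secant_cone m"
    unfolding secant_locus_cone_def segre_cone_eq by blast
qed

lemma zero_in_secant_cone: "0 \<in> secant_cone m"
proof -
  have "tprod m u v (\<lambda>_. 0) = 0" for u v
    by (auto simp: tprod_def fun_eq_iff)
  then show ?thesis
    unfolding secant_cone_eq by (metis (mono_tags, lifting) add_0 mem_Collect_eq)
qed

lemma secant_cone_subset_closure:
  "secant_cone m \<subseteq> secant_closure m"
proof
  fix T assume "T \<in> secant_cone m"
  moreover from this have "T \<in> tspace m"
    unfolding secant_cone_eq using tensor.subspace_add[OF subspace_tspace] tprod_in_tspace by auto
  ultimately show "T \<in> secant_closure m"
    unfolding zariski_closure_def by blast
qed

lemma polyfun_isCont: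
  assumes "p \<in> polyfun" "\<And>z. isCont (\<lambda>t. G t z) a"
  shows "isCont (\<lambda>t. p (G t)) a"
  using assms(1) by induction (auto intro: assms(2))

lemma zariski_closure_limit:
  fixes G :: "complex \<Rightarrow> tensor"
  assumes "\<And>t. t \<noteq> 0 \<Longrightarrow> G t \<in> S" "\<And>z. isCont (\<lambda>t. G t z) 0" "G 0 \<in> V"
  shows "G 0 \<in> zariski_closure V S"
  unfolding zariski_closure_def
proof (intro CollectI conjI ballI impI)
  fix p assume p: "p \<in> polyfun" and vanish: "\<forall>s\<in>S. p s = 0"
  have "(\<lambda>t. p (G t)) \<midarrow>0\<rightarrow> p (G 0)"
    using polyfun_isCont[OF p assms(2)] by (simp add: isCont_def)
  moreover have "(\<lambda>t. p (G t)) \<midarrow>0\<rightarrow> 0"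
    by (subst LIM_equal[where g = "\<lambda>_. 0"]) (auto simp: vanish assms(1))
  ultimately show "p (G 0) = 0" by (rule LIM_unique)
qed (fact assms(3))

definition tangent ::
    "nat \<Rightarrow> (nat \<Rightarrow> complex) \<Rightarrow> (nat \<Rightarrow> complex) \<Rightarrow> (nat \<Rightarrow> complex) \<Rightarrow> (nat \<Rightarrow> complex)
      \<Rightarrow> (nat \<Rightarrow> complex) \<Rightarrow> (nat \<Rightarrow> complex) \<Rightarrow> tensor" where
  "tangent m u u' v v' w w' = tprod m u' v w + tprod m u v' w + tprod m u v w'"

lemma tangent_in_secant_closure:
  "tangent m u u' v v' w w' \<in> secant_closure m"
proof -
  define G where "G t = tangent m u u' v v' w w'
    + tscale t (tprod m u' v' w + tprod m u' v w' + tprod m u v' w') + tscale (t^2) (tprod m u' v' w')"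
    for t
  have "G t = tprod m (\<lambda>i. (u i + t * u' i) / t) (\<lambda>j. v j + t * v' j) (\<lambda>k. w k + t * w' k)
      + tprod m (\<lambda>i. - u i / t) v w" if "t \<noteq> 0" for t
    using that by (auto simp: G_def tangent_def tprod_def tscale_def fun_eq_iff field_simps power2_eq_square)
  then have "G t \<in> secant_cone m" if "t \<noteq> 0" for t
    using that unfolding secant_cone_eq by blast
  moreover have "isCont (\<lambda>t. G t z) 0" for z
    by (cases z) (auto simp: G_def tangent_def tprod_def tscale_def intro!: continuous_intros)
  moreover have G0: "G 0 = tangent m u u' v v' w w'"
    by (simp add: G_def)
  moreover have "tangent m u u' v v' w w' \<in> tspace m"
    unfolding tangent_def by (intro tensor.subspace_add[OF subspace_tspace] tprod_in_tspace)
  ultimately have "G 0 \<in> secant_closure m"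
    by (intro zariski_closure_limit) auto
  then show ?thesis by (simp only: G0)
qed

section \<open>Determinantal obstructions\<close>

definition det2 :: "(nat \<Rightarrow> nat \<Rightarrow> complex) \<Rightarrow> complex" where
  "det2 M = M 0 0 * M 1 1 - M 0 1 * M 1 0"

text \<open>The polarisation of \<open>det2\<close>: \<open>det2 (P + N) = det2 P + mixed_det2 P N + det2 N\<close>.\<close>
definition mixed_det2 :: "(nat \<Rightarrow> nat \<Rightarrow> complex) \<Rightarrow> (nat \<Rightarrow> nat \<Rightarrow> complex) \<Rightarrow> complex" where
  "mixed_det2 P N = P 0 0 * N 1 1 + N 0 0 * P 1 1 - P 0 1 * N 1 0 - N 0 1 * P 1 0"

lemma rank_two_pencil_eq_0:
  assumes P: "\<And>i j. i < 2 \<Longrightarrow> j < 2 \<Longrightarrow> P i j = a * u i * v j + b * u' i * v' j"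
    and N: "\<And>i j. i < 2 \<Longrightarrow> j < 2 \<Longrightarrow> N i j = c * u i * v j + d * u' i * v' j"
    and "det2 P \<noteq> 0" "det2 N = 0" "mixed_det2 P N = 0"
    and "i < 2" "j < 2"
  shows "N i j = 0"
proof -
  define \<delta> where "\<delta> = (u 0 * u' 1 - u 1 * u' 0) * (v 0 * v' 1 - v 1 * v' 0)"
  have "det2 P = a * b * \<delta>" "det2 N = c * d * \<delta>" "mixed_det2 P N = (a * d + b * c) * \<delta>"
    unfolding det2_def mixed_det2_def \<delta>_def by (simp_all add: P N) algebra+
  with assms(3-5) have "a * b * \<delta> \<noteq> 0" "c * d = 0" "a * d + b * c = 0"
    by auto
  then have "c = 0" "d = 0" by auto
  then show ?thesis using N assms(6,7) by simp
qed

definition slice :: "tensor \<Rightarrow> nat \<Rightarrow> nat \<Rightarrow> nat \<Rightarrow> complex" where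
  "slice T k = (\<lambda>i j. T (i, j, k))"

lemma secant_slice_vanishes:
  assumes "T \<in> secant_cone m" "k \<le> m" "l \<le> m"
    and "det2 (slice T k) \<noteq> 0" "det2 (slice T l) = 0" "mixed_det2 (slice T k) (slice T l) = 0"
    and "i < 2" "j < 2"
  shows "T (i, j, l) = 0"
proof -
  obtain u v w u' v' w' where T: "T = tprod m u v w + tprod m u' v' w'"
    using assms(1) unfolding secant_cone_eq by blast
  have "slice T n i j = w n * u i * v j + w' n * u' i * v' j" if "n \<le> m" "i < 2" "j < 2" for n i j
    using that by (simp add: T slice_def tprod_def mult_ac)
  from rank_two_pencil_eq_0[OF this this, OF assms(2) _ _ assms(3) _ _ assms(4-8)]
  show ?thesis by (simp add: slice_def)
qed

lemma polyfun_diff: "p \<in> polyfun \<Longrightarrow> q \<in> polyfun \<Longrightarrow> (\<lambda>T. p T - q T) \<in> polyfun"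
  using polyfun.padd[OF _ polyfun.pmult[OF polyfun.pconst[of "-1"]], of p q] by simp

definition det3 :: "(nat \<Rightarrow> nat \<Rightarrow> complex) \<Rightarrow> complex" where
  "det3 M = M 0 0 * M 1 1 * M 2 2 - M 0 0 * M 1 2 * M 2 1 - M 0 1 * M 1 0 * M 2 2
    + M 0 1 * M 1 2 * M 2 0 + M 0 2 * M 1 0 * M 2 1 - M 0 2 * M 1 1 * M 2 0"

lemma det3_rank_two:
  assumes "\<And>a b. a < 3 \<Longrightarrow> b < 3 \<Longrightarrow> M a b = p a * q b + p' a * q' b"
  shows "det3 M = 0"
  unfolding det3_def by (simp add: assms) algebra

lemma det3_triangular:
  fixes e :: "nat \<Rightarrow> nat"
  assumes "distinct [e 0, e 1, e 2]" and "\<And>a k. a < 3 \<Longrightarrow> e a < k \<Longrightarrow> R a k = 0"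
  shows "det3 (\<lambda>a b. R a (e b)) = R 0 (e 0) * R 1 (e 1) * R 2 (e 2)"
proof -
  have "e 0 < e 1 \<or> e 1 < e 0" "e 0 < e 2 \<or> e 2 < e 0" "e 1 < e 2 \<or> e 2 < e 1"
    using assms(1) by (auto simp: nat_neq_iff)
  then show ?thesis
    unfolding det3_def by (elim disjE) (simp_all add: assms(2))
qed

definition contract :: "(nat \<times> nat \<Rightarrow> complex) \<Rightarrow> tensor \<Rightarrow> nat \<Rightarrow> complex" where
  "contract \<phi> T k = \<phi> (0, 0) * T (0, 0, k) + \<phi> (0, 1) * T (0, 1, k)
    + \<phi> (1, 0) * T (1, 0, k) + \<phi> (1, 1) * T (1, 1, k)"

lemma flattening_minor_polyfun: "(\<lambda>T. det3 (\<lambda>a b. contract (\<phi> a) T (e b))) \<in> polyfun"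
  unfolding det3_def contract_def
  by (intro polyfun_diff polyfun.padd polyfun.pmult polyfun.pconst polyfun.pcoord)

lemma flattening_minor_vanishes_on_secant:
  assumes "T \<in> secant_cone m" "\<And>b. b < 3 \<Longrightarrow> e b \<le> m"
  shows "det3 (\<lambda>a b. contract (\<phi> a) T (e b)) = 0"
proof -
  obtain u v w u' v' w' where T: "T = tprod m u v w + tprod m u' v' w'"
    using assms(1) unfolding secant_cone_eq by blast
  let ?c = "\<lambda>u v a. contract (\<phi> a) (tprod m u v (\<lambda>_. 1)) 0"
  show ?thesis
  proof (rule det3_rank_two)
    fix a b :: nat assume "a < 3" "b < 3"
    then show "contract (\<phi> a) T (e b) = ?c u v a * w (e b) + ?c u' v' a * w' (e b)"
      using assms(2) by (simp add: T contract_def tprod_def algebra_simps)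
  qed
qed

lemma not_in_secant_closure_if_flattening_minor:
  assumes "\<And>b. b < 3 \<Longrightarrow> e b \<le> m" and "det3 (\<lambda>a b. contract (\<phi> a) T (e b)) \<noteq> 0"
  shows "T \<notin> secant_closure m"
proof
  assume "T \<in> secant_closure m"
  then have "\<forall>p\<in>polyfun. (\<forall>s\<in>secant_cone m. p s = 0) \<longrightarrow> p T = 0"
    unfolding zariski_closure_def by blast
  from bspec[OF this flattening_minor_polyfun] assms show False
    using flattening_minor_vanishes_on_secant by blast
qed

definition shift :: "(nat \<Rightarrow> complex) \<Rightarrow> nat \<Rightarrow> complex" where
  "shift x = (\<lambda>k. if k = 0 then 0 else x (k - 1))"

definition L1_param :: "nat \<Rightarrow> (nat \<Rightarrow> complex) \<Rightarrow> tensor" where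
  "L1_param m x = tangent m (unit_vec 0) (unit_vec 1) (unit_vec 1) (unit_vec 0)
     (trunc m x) (shift (trunc m x))"

definition L2_param :: "nat \<Rightarrow> (nat \<Rightarrow> complex) \<Rightarrow> tensor" where
  "L2_param m y = tangent m (unit_vec 1) (unit_vec 0) (unit_vec 0) (\<lambda>j. - unit_vec 1 j)
     (shift (shift (trunc (m - 1) y))) (trunc (m - 1) y)"

lemma L1_param_apply:
  "i < 2 \<Longrightarrow> j < 2 \<Longrightarrow> k \<le> m \<Longrightarrow> L1_param m x (i, j, k) =
     (if i = j then trunc m x k else 0) + (if i = 0 \<and> j = 1 then shift (trunc m x) k else 0)"
  by (auto simp: L1_param_def tangent_def tprod_def unit_vec_def less_2_cases_iff)

lemma L2_param_apply:
  "i < 2 \<Longrightarrow> j < 2 \<Longrightarrow> k \<le> m \<Longrightarrow> L2_param m y (i, j, k) =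
     (if i = j then (if i = 0 then 1 else -1) * shift (shift (trunc (m - 1) y)) k else 0)
     + (if i = 1 \<and> j = 0 then trunc (m - 1) y k else 0)"
  by (auto simp: L2_param_def tangent_def tprod_def unit_vec_def less_2_cases_iff)

lemma L1_param_in_tspace: "L1_param m x \<in> tspace m"
  by (auto simp: L1_param_def tangent_def tprod_def tspace_def)

lemma L2_param_in_tspace: "L2_param m y \<in> tspace m"
  by (auto simp: L2_param_def tangent_def tprod_def tspace_def)

lemma linear_L1_param: "Vector_Spaces.linear vscale tscale (L1_param m)"
  by (auto simp: Vector_Spaces.linear_iff vector_space_tscale seq.vector_space_axioms
      L1_param_def tangent_def tprod_def trunc_def shift_def vscale_def tscale_def fun_eq_iff algebra_simps)

lemma linear_L2_param: "Vector_Spaces.linear vscale tscale (L2_param m)"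
  by (auto simp: Vector_Spaces.linear_iff vector_space_tscale seq.vector_space_axioms
      L2_param_def tangent_def tprod_def trunc_def shift_def vscale_def tscale_def fun_eq_iff algebra_simps)

lemma L1_param_cong: "trunc m x = trunc m x' \<Longrightarrow> L1_param m x = L1_param m x'"
  by (simp add: L1_param_def)

lemma L2_param_cong: "trunc (m - 1) y = trunc (m - 1) y' \<Longrightarrow> L2_param m y = L2_param m y'"
  by (simp add: L2_param_def)

lemma trunc_ne_0_if_L1_param_ne_0: "L1_param m x \<noteq> 0 \<Longrightarrow> trunc m x \<noteq> 0"
  by (metis L1_param_cong trunc_trunc seq_tensor.linear_0[OF linear_L1_param])

lemma trunc_ne_0_if_L2_param_ne_0: "L2_param m y \<noteq> 0 \<Longrightarrow> trunc (m - 1) y \<noteq> 0"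
  by (metis L2_param_cong trunc_trunc seq_tensor.linear_0[OF linear_L2_param])

lemma L1_param_in_secant_closure: "L1_param m x \<in> secant_closure m"
  by (simp add: L1_param_def tangent_in_secant_closure)

lemma L2_param_in_secant_closure: "L2_param m y \<in> secant_closure m"
  by (simp add: L2_param_def tangent_in_secant_closure)

lemma L1_param_not_secant:
  assumes "L1_param m x \<noteq> 0"
  shows "L1_param m x \<notin> secant_cone m"
proof
  assume secant: "L1_param m x \<in> secant_cone m"
  obtain r where r: "r < m" "x r \<noteq> 0" "\<And>k. r < k \<Longrightarrow> trunc m x k = 0"
    using trunc_ne_0_if_L1_param_ne_0[OF assms] by (rule obtain_last_nonzero) auto
  let ?T = "slice (L1_param m x)"
  have "det2 (?T r) = x r * x r" "det2 (?T (r + 1)) = 0" "mixed_det2 (?T r) (?T (r + 1)) = 0"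
    using r by (simp_all add: det2_def mixed_det2_def slice_def L1_param_apply trunc_def shift_def)
  then have "L1_param m x (0, 1, r + 1) = 0"
    using r by (intro secant_slice_vanishes[OF secant]) auto
  then show False
    using r by (simp add: L1_param_apply trunc_def shift_def)
qed

lemma L2_param_not_secant:
  assumes "L2_param m y \<noteq> 0"
  shows "L2_param m y \<notin> secant_cone m"
proof
  assume secant: "L2_param m y \<in> secant_cone m"
  obtain s where s: "s < m - 1" "y s \<noteq> 0" "\<And>k. k < s \<Longrightarrow> y k = 0"
    using trunc_ne_0_if_L2_param_ne_0[OF assms] by (rule obtain_first_nonzero) auto
  let ?T = "slice (L2_param m y)"
  have "det2 (?T (s + 2)) = - (y s * y s)" "det2 (?T s) = 0" "mixed_det2 (?T (s + 2)) (?T s) = 0"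
    using s by (simp_all add: det2_def mixed_det2_def slice_def L2_param_apply trunc_def shift_def)
  then have "L2_param m y (1, 0, s) = 0"
    using s by (intro secant_slice_vanishes[OF secant]) auto
  then show False
    using s by (simp add: L2_param_apply trunc_def)
qed

lemma contract_L1_L2_param:
  fixes m :: nat and x y :: "nat \<Rightarrow> complex"
  defines "T \<equiv> L1_param m x + L2_param m y"
  shows "contract (\<lambda>(i, j). if i = j then 1/2 else 0) T = trunc m x"
    and "contract (\<lambda>(i, j). if (i, j) = (0, 1) then 1 else 0) T = shift (trunc m x)"
    and "contract (\<lambda>(i, j). if (i, j) = (1, 0) then 1 else 0) T = trunc (m - 1) y"
    and "contract (\<lambda>(i, j). if i = j then (if i = 0 then 1/2 else -1/2) else 0) T
      = shift (shift (trunc (m - 1) y))"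
  by (auto simp: T_def contract_def L1_param_def L2_param_def tangent_def tprod_def unit_vec_def
      trunc_def shift_def field_simps fun_eq_iff)

lemma L2_row_with_fresh_leading_column:
  assumes "q < m - 1" "\<And>k. q < k \<Longrightarrow> trunc (m - 1) y k = 0"
  obtains \<psi> l where "l \<notin> {r, r + 1}" "l \<le> m" "contract \<psi> (L1_param m x + L2_param m y) l = y q"
    "\<And>k. l < k \<Longrightarrow> contract \<psi> (L1_param m x + L2_param m y) k = 0"
proof -
  let ?T = "L1_param m x + L2_param m y"
  define \<phi>2 :: "nat \<times> nat \<Rightarrow> complex" where "\<phi>2 = (\<lambda>(i, j). if (i, j) = (1, 0) then 1 else 0)"
  define \<phi>3 :: "nat \<times> nat \<Rightarrow> complex"
    where "\<phi>3 = (\<lambda>(i, j). if i = j then (if i = 0 then 1/2 else -1/2) else 0)"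
  have rows: "contract \<phi>2 ?T = trunc (m - 1) y" "contract \<phi>3 ?T = shift (shift (trunc (m - 1) y))"
    unfolding \<phi>2_def \<phi>3_def by (fact contract_L1_L2_param)+
  show ?thesis
  proof (cases "q \<in> {r, r + 1}")
    case True
    have "contract \<phi>3 ?T k = 0" if "q + 2 < k" for k
      using assms(2)[of "k - 2"] that by (simp add: rows shift_def numeral_2_eq_2)
    with True assms(1) show ?thesis
      by (intro that[of "q + 2" \<phi>3]) (auto simp: rows shift_def trunc_def)
  next
    case False
    with assms show ?thesis
      by (intro that[of q \<phi>2]) (auto simp: rows trunc_def)
  qed
qed

lemma L1_plus_L2_param_not_in_closure:
  assumes "L1_param m x \<noteq> 0" "L2_param m y \<noteq> 0"
  shows "L1_param m x + L2_param m y \<notin> secant_closure m"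
proof -
  let ?T = "L1_param m x + L2_param m y"
  obtain r where r: "r < m" "x r \<noteq> 0" "\<And>k. r < k \<Longrightarrow> trunc m x k = 0"
    using trunc_ne_0_if_L1_param_ne_0[OF assms(1)] by (rule obtain_last_nonzero) auto
  obtain q where q: "q < m - 1" "y q \<noteq> 0" "\<And>k. q < k \<Longrightarrow> trunc (m - 1) y k = 0"
    using trunc_ne_0_if_L2_param_ne_0[OF assms(2)] by (rule obtain_last_nonzero) auto
  obtain \<psi> l where \<psi>: "l \<notin> {r, r + 1}" "l \<le> m" "contract \<psi> ?T l = y q"
    "\<And>k. l < k \<Longrightarrow> contract \<psi> ?T k = 0"
    using q(1,3) by (rule L2_row_with_fresh_leading_column[where r = r and x = x]) auto
  define \<phi>0 :: "nat \<times> nat \<Rightarrow> complex" where "\<phi>0 = (\<lambda>(i, j). if i = j then 1/2 else 0)"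
  define \<phi>1 :: "nat \<times> nat \<Rightarrow> complex" where "\<phi>1 = (\<lambda>(i, j). if (i, j) = (0, 1) then 1 else 0)"
  have rows: "contract \<phi>0 ?T = trunc m x" "contract \<phi>1 ?T = shift (trunc m x)"
    unfolding \<phi>0_def \<phi>1_def by (fact contract_L1_L2_param)+
  define \<Phi> where "\<Phi> = [\<phi>0, \<phi>1, \<psi>]"
  define e where "e = [r, r + 1, l]"
  have "det3 (\<lambda>a b. contract (\<Phi> ! a) ?T (e ! b))
      = contract (\<Phi> ! 0) ?T (e ! 0) * contract (\<Phi> ! 1) ?T (e ! 1) * contract (\<Phi> ! 2) ?T (e ! 2)"
  proof (rule det3_triangular)
    show "distinct [e ! 0, e ! 1, e ! 2]" using \<psi>(1) by (auto simp: e_def)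
    fix a k assume "a < 3" "e ! a < k"
    then show "contract (\<Phi> ! a) ?T k = 0"
      using r \<psi>(4) by (auto simp: numeral_3_eq_3 less_Suc_eq \<Phi>_def e_def rows shift_def)
  qed
  also have "\<dots> = x r * x r * y q"
    using r \<psi>(3) by (simp add: \<Phi>_def e_def rows shift_def trunc_def)
  finally have "det3 (\<lambda>a b. contract (\<Phi> ! a) ?T (e ! b)) \<noteq> 0"
    using r q by simp
  moreover have "e ! b \<le> m" if "b < 3" for b
    using that r \<psi>(2) by (auto simp: e_def numeral_3_eq_3 less_Suc_eq)
  ultimately show ?thesis
    by (intro not_in_secant_closure_if_flattening_minor[where e = "(!) e" and \<phi> = "(!) \<Phi>"])
qed

lemma L1_L2_param_in_closure_iff:
  "L1_param m x + L2_param m y \<in> secant_closure m \<longleftrightarrow> L1_param m x = 0 \<or> L2_param m y = 0"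
proof
  assume "L1_param m x = 0 \<or> L2_param m y = 0"
  then show "L1_param m x + L2_param m y \<in> secant_closure m"
    using L1_param_in_secant_closure L2_param_in_secant_closure by auto
qed (use L1_plus_L2_param_not_in_closure in blast)

definition L_param :: "nat \<Rightarrow> (nat \<Rightarrow> complex) \<Rightarrow> tensor" where
  "L_param m z = L1_param m z + L2_param m (\<lambda>t. z (m + t))"

lemma linear_L_param: "Vector_Spaces.linear vscale tscale (L_param m)"
proof -
  have "L_param m (x + y) = L_param m x + L_param m y" for x y
  proof -
    have shifted: "(\<lambda>t. (x + y) (m + t)) = (\<lambda>t. x (m + t)) + (\<lambda>t. y (m + t))"
      by (simp add: fun_eq_iff)
    show ?thesis
      unfolding L_param_def shifted seq_tensor.linear_add[OF linear_L1_param] seq_tensor.linear_add[OF linear_L2_param]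
      by (simp only: add_ac)
  qed
  moreover have "L_param m (vscale c x) = tscale c (L_param m x)" for c x
  proof -
    have "(\<lambda>t. vscale c x (m + t)) = vscale c (\<lambda>t. x (m + t))"
      by (simp add: vscale_def)
    then show ?thesis
      unfolding L_param_def tensor.scale_right_distrib seq_tensor.linear_scale[OF linear_L1_param, symmetric]
        seq_tensor.linear_scale[OF linear_L2_param, symmetric]
      by simp
  qed
  ultimately show ?thesis
    by (simp add: Vector_Spaces.linear_iff vector_space_tscale seq.vector_space_axioms)
qed

lemma dim_L_param: "cdim (range (L_param m)) = m + (m - 1)"
proof (rule dim_range_eq_if_coordinates[OF linear_L_param])
  show "L_param m z = L_param m (trunc (m + (m - 1)) z)" for z
    unfolding L_param_def by (intro arg_cong2[where f = "(+)"] L1_param_cong L2_param_cong)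
      (auto simp: trunc_def fun_eq_iff)
  show "L_param m z (if t < m then (0, 1, t + 1) else (1, 0, t - m)) = z t"
    if "t < m + (m - 1)" for z t
    using that by (cases "t < m") (simp_all add: L_param_def L1_param_apply L2_param_apply trunc_def shift_def)
qed

lemma L1_plus_L2_param:
  "L1_param m x + L2_param m y = L_param m (\<lambda>t. if t < m then x t else y (t - m))"
  unfolding L_param_def
  by (intro arg_cong2[where f = "(+)"] L1_param_cong L2_param_cong) (auto simp: trunc_def fun_eq_iff)

lemma L1_L2_subset_L: "range (L1_param m) \<union> range (L2_param m) \<subseteq> range (L_param m)"
proof
  fix T assume "T \<in> range (L1_param m) \<union> range (L2_param m)"
  then obtain x y where "T = L1_param m x + L2_param m y"
    using seq_tensor.linear_0[OF linear_L1_param] seq_tensor.linear_0[OF linear_L2_param]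
    by (metis UnE add_0 add_0_right imageE)
  then show "T \<in> range (L_param m)"
    by (simp add: L1_plus_L2_param)
qed

lemma L_inter_secant_closure:
  "range (L_param m) \<inter> secant_closure m = range (L1_param m) \<union> range (L2_param m)"
proof (intro equalityI subsetI)
  fix T assume T: "T \<in> range (L_param m) \<inter> secant_closure m"
  then obtain z where z: "T = L1_param m z + L2_param m (\<lambda>t. z (m + t))"
    by (auto simp: L_param_def)
  with T have "L1_param m z = 0 \<or> L2_param m (\<lambda>t. z (m + t)) = 0"
    using L1_L2_param_in_closure_iff by simp
  with z show "T \<in> range (L1_param m) \<union> range (L2_param m)"
    by auto
qed (use L1_L2_subset_L[of m] in \<open>auto simp: L1_param_in_secant_closure L2_param_in_secant_closure\<close>)

lemma L_inter_secant_cone: "range (L_param m) \<inter> secant_cone m = {0}"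
proof
  show "range (L_param m) \<inter> secant_cone m \<subseteq> {0}"
  proof
    fix T assume T: "T \<in> range (L_param m) \<inter> secant_cone m"
    then have "T \<in> range (L1_param m) \<union> range (L2_param m)"
      using L_inter_secant_closure secant_cone_subset_closure by blast
    with T show "T \<in> {0}"
      using L1_param_not_secant L2_param_not_secant by fastforce
  qed
  show "{0} \<subseteq> range (L_param m) \<inter> secant_cone m"
    using seq_tensor.linear_0[OF linear_L_param] zero_in_secant_cone by (metis IntI empty_subsetI insert_subset rangeI)
qed

lemma L1_inter_L2: "range (L1_param m) \<inter> range (L2_param m) = {0}"
proof (intro equalityI subsetI)
  fix T assume "T \<in> range (L1_param m) \<inter> range (L2_param m)"
  then obtain x y where T: "T = L1_param m x" "L1_param m x = L2_param m y" by auto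
  have "trunc m x = 0"
  proof
    fix k
    show "trunc m x k = 0 k"
    proof (cases "k < m")
      case True
      have "L1_param m x (0, 1, k + 1) = L2_param m y (0, 1, k + 1)" using T(2) by simp
      with True show ?thesis by (simp add: L1_param_apply L2_param_apply trunc_def shift_def)
    qed (simp add: trunc_def)
  qed
  then show "T \<in> {0}"
    using T(1) trunc_ne_0_if_L1_param_ne_0 by blast
next
  fix T :: tensor assume "T \<in> {0}"
  then show "T \<in> range (L1_param m) \<inter> range (L2_param m)"
    using seq_tensor.linear_0[OF linear_L1_param] seq_tensor.linear_0[OF linear_L2_param] by (metis IntI rangeI singletonD)
qed

lemma span_L1_L2: "cspan (range (L1_param m) \<union> range (L2_param m)) = range (L_param m)"
proof (rule tensor.span_subspace)
  show "range (L_param m) \<subseteq> cspan (range (L1_param m) \<union> range (L2_param m))"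
  proof
    fix T assume "T \<in> range (L_param m)"
    then obtain x y where "T = L1_param m x + L2_param m y"
      by (auto simp: L_param_def)
    then show "T \<in> cspan (range (L1_param m) \<union> range (L2_param m))"
      by (simp add: tensor.span_add tensor.span_base)
  qed
qed (rule L1_L2_subset_L, rule subspace_range_linear[OF linear_L_param])

lemma L_param_in_tspace: "range (L_param m) \<subseteq> tspace m"
  using tensor.subspace_add[OF subspace_tspace] L1_param_in_tspace L2_param_in_tspace
  by (auto simp: L_param_def)

theorem theorem4p7:
  fixes m :: nat
  assumes "0 < m"
  defines "V \<equiv> tspace m"
      and "Y \<equiv> segre_cone m"
  defines "S2o \<equiv> secant_locus_cone Y"
  defines "S2 \<equiv> zariski_closure V S2o"
  shows "\<exists>L L1 L2.
           csubspace L \<and> L \<subseteq> V \<and> cdim L + (2 * m + 5) = cdim V \<and>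
           L \<inter> S2o = {0} \<and>
           csubspace L1 \<and> csubspace L2 \<and>
           L \<inter> S2 = L1 \<union> L2 \<and> L1 \<inter> L2 = {0} \<and>
           L1 - {0} \<subseteq> S2 - S2o \<and> L2 - {0} \<subseteq> S2 - S2o \<and>
           cspan (L1 \<union> L2) = L"
proof (intro exI conjI)
  show "cdim (range (L_param m)) + (2 * m + 5) = cdim V"
    using assms(1) by (simp add: V_def dim_L_param dim_tspace)
  show "range (L1_param m) - {0} \<subseteq> S2 - S2o" "range (L2_param m) - {0} \<subseteq> S2 - S2o"
    using L1_param_in_secant_closure L1_param_not_secant L2_param_in_secant_closure L2_param_not_secant
    by (auto simp: S2_def S2o_def V_def Y_def)
qed (simp_all add: S2_def S2o_def V_def Y_def subspace_range_linear linear_L_param linear_L1_param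
    linear_L2_param L_param_in_tspace L_inter_secant_cone L_inter_secant_closure L1_inter_L2 span_L1_L2)

end
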